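(* Let $f:\mathbb{R}_{++}\to\mathbb{R}$ be operator convex, i.e. for all $n\in\mathbb{N}$, all positive definite Hermitian $X,Y\in\mathbb{H}^n_{++}$ and all $\lambda\in[0,1]$, $f(\lambda X+(1-\lambda)Y)\preceq\lambda f(X)+(1-\lambda)f(Y)$. Then for any positive semidefinite $A\in\mathbb{H}^n$, the function $g(X)=\operatorname{tr}[Af(X)]$ is $\lambda_{\max}(A)$-smooth and $\lambda_{\min}(A)$-strongly convex relative to $X\mapsto\operatorname{tr}[f(X)]$ on $\mathbb{H}^n_{++}$.
   Context: For Hermitian $X=\sum_i\lambda_iv_iv_i^\dagger$, $f(X)=\sum_if(\lambda_i)v_iv_i^\dagger$. $\preceq$ is the semidefinite (Loewner) order; $\lambda_{\max},\lambda_{\min}$ are largest/smallest eigenvalues. A function $g$ is $L$-smooth relative to $\varphi$ on a set $\mathcal{C}$ if $L\varphi-g$ is convex on the relative interior of $\mathcal{C}$, and $\mu$-strongly convex relative to $\varphi$ if $g-\mu\varphi$ is convex there. *)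

theory Defs
  imports "Jordan_Normal_Form.Char_Poly"
begin

definition cadj :: "complex mat \<Rightarrow> complex mat" where
  "cadj A = mat (dim_col A) (dim_row A) (\<lambda>(i,j). cnj (A $$ (j,i)))"

definition mtrace :: "complex mat \<Rightarrow> complex" where
  "mtrace A = (\<Sum>i<dim_row A. A $$ (i,i))"

definition hermitian :: "nat \<Rightarrow> complex mat \<Rightarrow> bool" where
  "hermitian n A \<longleftrightarrow> A \<in> carrier_mat n n \<and> cadj A = A"

definition qform :: "complex mat \<Rightarrow> complex vec \<Rightarrow> complex" where
  "qform A v = (\<Sum>i<dim_vec v. \<Sum>j<dim_vec v. cnj (v $ i) * A $$ (i,j) * v $ j)"

definition psd :: "nat \<Rightarrow> complex mat \<Rightarrow> bool" where
  "psd n A \<longleftrightarrow> hermitian n A \<and> (\<forall>v\<in>carrier_vec n. 0 \<le> Re (qform A v))"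

definition pd :: "nat \<Rightarrow> complex mat \<Rightarrow> bool" where
  "pd n A \<longleftrightarrow> hermitian n A \<and> (\<forall>v\<in>carrier_vec n. v \<noteq> 0\<^sub>v n \<longrightarrow> 0 < Re (qform A v))"

definition loewner_le :: "nat \<Rightarrow> complex mat \<Rightarrow> complex mat \<Rightarrow> bool" where
  "loewner_le n A B \<longleftrightarrow> A \<in> carrier_mat n n \<and> B \<in> carrier_mat n n \<and> psd n (B - A)"

definition unitary :: "nat \<Rightarrow> complex mat \<Rightarrow> bool" where
  "unitary n U \<longleftrightarrow> U \<in> carrier_mat n n \<and> U * cadj U = 1\<^sub>m n"

definition rdiag :: "nat \<Rightarrow> (nat \<Rightarrow> real) \<Rightarrow> complex mat" where
  "rdiag n l = mat_diag n (\<lambda>i. complex_of_real (l i))"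

definition spectral_decomp :: "complex mat \<Rightarrow> complex mat \<Rightarrow> (nat \<Rightarrow> real) \<Rightarrow> bool" where
  "spectral_decomp X U l \<longleftrightarrow> unitary (dim_row X) U \<and> X = U * rdiag (dim_row X) l * cadj U"

definition mat_fun :: "(real \<Rightarrow> real) \<Rightarrow> complex mat \<Rightarrow> complex mat" where
  "mat_fun f X = (let (U, l) = (SOME (U, l). spectral_decomp X U l)
                  in U * rdiag (dim_row X) (f \<circ> l) * cadj U)"

definition lambda_max :: "complex mat \<Rightarrow> real" where
  "lambda_max A = Max {r. eigenvalue A (complex_of_real r)}"

definition lambda_min :: "complex mat \<Rightarrow> real" where
  "lambda_min A = Min {r. eigenvalue A (complex_of_real r)}"

definition operator_convex :: "(real \<Rightarrow> real) \<Rightarrow> bool" where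
  "operator_convex f \<longleftrightarrow> (\<forall>n X Y t. pd n X \<longrightarrow> pd n Y \<longrightarrow> 0 \<le> t \<longrightarrow> t \<le> 1 \<longrightarrow>
     loewner_le n (mat_fun f (complex_of_real t \<cdot>\<^sub>m X + complex_of_real (1 - t) \<cdot>\<^sub>m Y))
       (complex_of_real t \<cdot>\<^sub>m mat_fun f X + complex_of_real (1 - t) \<cdot>\<^sub>m mat_fun f Y))"

text \<open>convexity of a real-valued function on the (open, convex) set of n x n
  positive definite Hermitian matrices, which is its own relative interior in H^n\<close>
definition convex_on_pd :: "nat \<Rightarrow> (complex mat \<Rightarrow> real) \<Rightarrow> bool" where
  "convex_on_pd n h \<longleftrightarrow> (\<forall>X Y t. pd n X \<longrightarrow> pd n Y \<longrightarrow> 0 \<le> t \<longrightarrow> t \<le> 1 \<longrightarrow>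
     h (complex_of_real t \<cdot>\<^sub>m X + complex_of_real (1 - t) \<cdot>\<^sub>m Y) \<le> t * h X + (1 - t) * h Y)"

definition rel_smooth :: "nat \<Rightarrow> real \<Rightarrow> (complex mat \<Rightarrow> real) \<Rightarrow> (complex mat \<Rightarrow> real) \<Rightarrow> bool" where
  "rel_smooth n L g \<phi> \<longleftrightarrow> convex_on_pd n (\<lambda>X. L * \<phi> X - g X)"

definition rel_strongly_convex :: "nat \<Rightarrow> real \<Rightarrow> (complex mat \<Rightarrow> real) \<Rightarrow> (complex mat \<Rightarrow> real) \<Rightarrow> bool" where
  "rel_strongly_convex n \<mu> g \<phi> \<longleftrightarrow> convex_on_pd n (\<lambda>X. g X - \<mu> * \<phi> X)"

end

theory Submission
  imports Defs "Jordan_Normal_Form.Schur_Decomposition" "Jordan_Normal_Form.Spectral_Radius"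
begin

(* For real c, c tr f(X) - tr(A f(X)) = tr((cI - A) f(X)) and tr(A f(X)) - c tr f(X) = tr((A - cI) f(X)).
   By the spectral theorem, cI - A is positive semidefinite for c = lambda_max A and A - cI is
   positive semidefinite for c = lambda_min A.  For positive semidefinite P the map X |-> tr(P f(X))
   is convex: operator convexity makes the gap between the convex combination of the values and the
   value at the convex combination positive semidefinite, and tr(P D) >= 0 for positive semidefinite
   P and D.  The spectral theorem itself is proved by deflation: conjugating by a unitary matrix
   whose first column is an eigenvector splits off a 1x1 diagonal block. *)

section \<open>Conjugate transpose and unitary matrices\<close>

lemma cadj_carrier_mat[simp]: "A \<in> carrier_mat n m \<Longrightarrow> cadj A \<in> carrier_mat m n"
  by (auto simp: cadj_def)

lemma dim_cadj[simp]: "dim_row (cadj A) = dim_col A" "dim_col (cadj A) = dim_row A"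
  by (auto simp: cadj_def)

lemma index_cadj[simp]: "i < dim_col A \<Longrightarrow> j < dim_row A \<Longrightarrow> cadj A $$ (i,j) = cnj (A $$ (j,i))"
  by (auto simp: cadj_def)

lemma cadj_cadj[simp]: "cadj (cadj A) = A"
  by (rule eq_matI) auto

lemma cadj_mult: "A \<in> carrier_mat n m \<Longrightarrow> B \<in> carrier_mat m k \<Longrightarrow> cadj (A * B) = cadj B * cadj A"
  by (rule eq_matI) (auto simp: scalar_prod_def mult.commute intro: sum.cong)

lemma index_mult_cadj:
  "U \<in> carrier_mat n m \<Longrightarrow> i < n \<Longrightarrow> j < n \<Longrightarrow>
   (U * cadj U) $$ (i,j) = (\<Sum>k<m. U $$ (i,k) * cnj (U $$ (j,k)))"
  by (simp add: scalar_prod_def lessThan_atLeast0)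

lemma index_cadj_mult:
  "U \<in> carrier_mat m n \<Longrightarrow> i < n \<Longrightarrow> j < n \<Longrightarrow>
   (cadj U * U) $$ (i,j) = (\<Sum>k<m. cnj (U $$ (k,i)) * U $$ (k,j))"
  by (simp add: scalar_prod_def lessThan_atLeast0)

lemma rdiag_carrier_mat[simp]: "rdiag n l \<in> carrier_mat n n"
  by (simp add: rdiag_def)

lemma index_mult_rdiag_cadj:
  assumes U: "U \<in> carrier_mat n n" and i: "i < n" and j: "j < n"
  shows "(U * rdiag n l * cadj U) $$ (i,j) = (\<Sum>k<n. U $$ (i,k) * complex_of_real (l k) * cnj (U $$ (j,k)))"
proof -
  have "U * rdiag n l = mat n n (\<lambda>(i,j). U $$ (i,j) * complex_of_real (l j))"
    unfolding rdiag_def by (rule mat_diag_mult_right[OF U])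
  then show ?thesis
    using U i j by (simp add: scalar_prod_def lessThan_atLeast0)
qed

lemma mult_carrier_mat_square[simp]:
  "A \<in> carrier_mat n n \<Longrightarrow> B \<in> carrier_mat n n \<Longrightarrow> A * B \<in> carrier_mat n n"
  by (rule mult_carrier_mat)

lemma unitary_carrier_mat: "unitary n U \<Longrightarrow> U \<in> carrier_mat n n"
  by (simp add: unitary_def)

lemma unitary_cadj_mult: "unitary n U \<Longrightarrow> cadj U * U = 1\<^sub>m n"
  unfolding unitary_def using mat_mult_left_right_inverse[of U n "cadj U"] by auto

lemma unitaryI: "U \<in> carrier_mat n n \<Longrightarrow> cadj U * U = 1\<^sub>m n \<Longrightarrow> unitary n U"
  unfolding unitary_def using mat_mult_left_right_inverse[of "cadj U" n U] by auto

lemma unitary_rows_orthonormal: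
  "unitary n U \<Longrightarrow> i < n \<Longrightarrow> j < n \<Longrightarrow>
   (\<Sum>k<n. U $$ (i,k) * cnj (U $$ (j,k))) = (if i = j then 1 else 0)"
  using index_mult_cadj[of U n n i j] by (auto simp: unitary_def)

lemma unitary_cols_orthonormal:
  "unitary n U \<Longrightarrow> i < n \<Longrightarrow> j < n \<Longrightarrow>
   (\<Sum>k<n. cnj (U $$ (k,i)) * U $$ (k,j)) = (if i = j then 1 else 0)"
  using index_cadj_mult[of U n n i j] unitary_cadj_mult[of n U] by (auto simp: unitary_def)

lemma unitary_mult:
  assumes U: "unitary n U" and V: "unitary n V"
  shows "unitary n (U * V)"
proof -
  have Uc: "U \<in> carrier_mat n n" and Vc: "V \<in> carrier_mat n n"
    using U V by (simp_all add: unitary_def)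
  have "U * V * cadj (U * V) = U * (V * cadj V) * cadj U"
    using Uc Vc by (simp add: cadj_mult assoc_mult_mat[of _ n n _ n _ n])
  also have "\<dots> = 1\<^sub>m n"
    using U V Uc by (simp add: unitary_def)
  finally show ?thesis
    using Uc Vc by (simp add: unitary_def)
qed

lemma unitary_conj_cancel:
  assumes W: "unitary n W" and A: "A \<in> carrier_mat n n"
  shows "W * (cadj W * A * W) * cadj W = A"
proof -
  have Wc: "W \<in> carrier_mat n n" using W by (rule unitary_carrier_mat)
  have "W * (cadj W * A * W) * cadj W = (W * cadj W) * A * (W * cadj W)"
    using Wc A by (simp add: assoc_mult_mat[of _ n n _ n _ n])
  then show ?thesis
    using W A by (simp add: unitary_def)
qed

lemma unitary_of_orthonormal_cols:
  assumes W: "W \<in> carrier_mat n n"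
    and orth: "\<And>i j. i < n \<Longrightarrow> j < n \<Longrightarrow> col W j \<bullet>c col W i = (if i = j then 1 else 0)"
  shows "unitary n W"
proof (rule unitaryI[OF W], rule eq_matI)
  fix i j assume "i < dim_row (1\<^sub>m n :: complex mat)" "j < dim_col (1\<^sub>m n :: complex mat)"
  then have i: "i < n" and j: "j < n" by auto
  have "(cadj W * W) $$ (i,j) = col W j \<bullet>c col W i"
    using W i j by (simp add: index_cadj_mult scalar_prod_def lessThan_atLeast0 mult.commute)
  then show "(cadj W * W) $$ (i,j) = 1\<^sub>m n $$ (i,j)"
    using orth[OF i j] i j by simp
qed (use W in auto)

lemma cscalar_prod_smult:
  "v \<in> carrier_vec n \<Longrightarrow> w \<in> carrier_vec n \<Longrightarrow>
   (a \<cdot>\<^sub>v v) \<bullet>c (b \<cdot>\<^sub>v w) = a * cnj b * (v \<bullet>c w)"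
  by (simp add: scalar_prod_def sum_distrib_left ac_simps)

lemma unitary_first_col_exists:
  assumes v: "v \<in> carrier_vec n" and v0: "v \<noteq> 0\<^sub>v n"
  shows "\<exists>W c. unitary n W \<and> col W 0 = c \<cdot>\<^sub>v v"
proof -
  interpret cof_vec_space n "TYPE(complex)" .
  define b where "b = basis_completion v"
  have b: "set b \<subseteq> carrier_vec n" "distinct b" "\<not> lin_dep (set b)" "hd b = v" "length b = n"
    using basis_completion[OF v v0] unfolding b_def by auto
  have n: "0 < n" using v v0 by (cases n) auto
  obtain vs where bv: "b = v # vs" using b(4,5) n by (cases b) auto
  define ws where "ws = gram_schmidt n b"
  have ws: "set ws \<subseteq> carrier_vec n" "corthogonal ws" "length ws = n"
    using gram_schmidt_result[OF b(1-3) refl] b(5) unfolding ws_def by auto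
  have "hd ws = v" using gram_schmidt_hd[OF v, of vs] unfolding ws_def bv .
  then have ws0: "ws ! 0 = v" using ws(3) n by (cases ws) auto
  define c where "c i = complex_of_real (1 / sqrt (Re (ws ! i \<bullet>c ws ! i)))" for i
  define W where "W = mat_of_cols n (map (\<lambda>i. c i \<cdot>\<^sub>v ws ! i) [0..<n])"
  have wsi: "ws ! i \<in> carrier_vec n" if "i < n" for i using ws that by auto
  have colW: "col W i = c i \<cdot>\<^sub>v ws ! i" if "i < n" for i
    using that wsi[OF that] by (simp add: W_def)
  have normalized: "c i * cnj (c i) * (ws ! i \<bullet>c ws ! i) = 1" if i: "i < n" for i
  proof -
    have "ws ! i \<noteq> 0\<^sub>v n"
      using corthogonalD[OF ws(2), of i i] ws(3) i wsi[OF i] by auto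
    then have "0 < ws ! i \<bullet>c ws ! i"
      using wsi[OF i] by simp
    then obtain r where r: "0 < r" "ws ! i \<bullet>c ws ! i = complex_of_real r"
      by (metis complex_eq_iff less_complex_def zero_complex.sel Re_complex_of_real Im_complex_of_real)
    have "c i = complex_of_real (1 / sqrt r)"
      by (simp add: c_def r(2))
    then have "c i * cnj (c i) * (ws ! i \<bullet>c ws ! i) = complex_of_real ((1 / sqrt r)\<^sup>2 * r)"
      by (simp only: r(2) complex_cnj_complex_of_real of_real_mult power2_eq_square)
    also have "(1 / sqrt r)\<^sup>2 * r = 1"
      using r(1) by (simp add: power_divide)
    finally show ?thesis by simp
  qed
  have "unitary n W"
  proof (rule unitary_of_orthonormal_cols)
    fix i j assume i: "i < n" and j: "j < n"
    have "col W j \<bullet>c col W i = c j * cnj (c i) * (ws ! j \<bullet>c ws ! i)"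
      using i j by (simp add: colW cscalar_prod_smult[OF wsi[OF j] wsi[OF i]])
    then show "col W j \<bullet>c col W i = (if i = j then 1 else 0)"
      using normalized[OF i] corthogonalD[OF ws(2), of j i] ws(3) i j by auto
  qed (simp add: W_def carrier_matI)
  moreover have "col W 0 = c 0 \<cdot>\<^sub>v v" using colW[OF n] ws0 by simp
  ultimately show ?thesis by blast
qed

section \<open>Spectral theorem for Hermitian matrices\<close>

definition diag_block :: "complex \<Rightarrow> complex mat \<Rightarrow> complex mat" where
  "diag_block a B = mat (Suc (dim_row B)) (Suc (dim_row B))
     (\<lambda>(i,j). if i = 0 \<and> j = 0 then a else if i = 0 \<or> j = 0 then 0 else B $$ (i - 1, j - 1))"

lemma dim_diag_block[simp]:
  "dim_row (diag_block a B) = Suc (dim_row B)" "dim_col (diag_block a B) = Suc (dim_row B)"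
  by (simp_all add: diag_block_def)

lemma diag_block_carrier_mat[simp]: "B \<in> carrier_mat m m \<Longrightarrow> diag_block a B \<in> carrier_mat (Suc m) (Suc m)"
  by (simp add: diag_block_def)

lemma index_diag_block[simp]:
  "diag_block a B $$ (0, 0) = a"
  "j < dim_row B \<Longrightarrow> diag_block a B $$ (0, Suc j) = 0"
  "i < dim_row B \<Longrightarrow> diag_block a B $$ (Suc i, 0) = 0"
  "i < dim_row B \<Longrightarrow> j < dim_row B \<Longrightarrow> diag_block a B $$ (Suc i, Suc j) = B $$ (i, j)"
  by (auto simp: diag_block_def)

lemma unitary_diag_block:
  assumes U: "unitary m U"
  shows "unitary (Suc m) (diag_block 1 U)"
proof (rule unitaryI)
  have Uc: "U \<in> carrier_mat m m" using U by (rule unitary_carrier_mat)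
  then show Vc: "diag_block 1 U \<in> carrier_mat (Suc m) (Suc m)" by simp
  show "cadj (diag_block 1 U) * diag_block 1 U = 1\<^sub>m (Suc m)"
  proof (rule eq_matI)
    fix i j assume "i < dim_row (1\<^sub>m (Suc m) :: complex mat)" "j < dim_col (1\<^sub>m (Suc m) :: complex mat)"
    then have i: "i < Suc m" and j: "j < Suc m" by auto
    have "(cadj (diag_block 1 U) * diag_block 1 U) $$ (i,j)
      = cnj (diag_block 1 U $$ (0,i)) * diag_block 1 U $$ (0,j)
        + (\<Sum>k<m. cnj (diag_block 1 U $$ (Suc k,i)) * diag_block 1 U $$ (Suc k,j))"
      by (simp add: index_cadj_mult[OF Vc i j] sum.lessThan_Suc_shift del: sum.lessThan_Suc)
    also have "\<dots> = 1\<^sub>m (Suc m) $$ (i,j)"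
      using i j Uc unitary_cols_orthonormal[OF U] by (cases i; cases j) simp_all
    finally show "(cadj (diag_block 1 U) * diag_block 1 U) $$ (i,j) = 1\<^sub>m (Suc m) $$ (i,j)" .
  qed (use Vc in auto)
qed

lemma diag_block_mult_rdiag_cadj:
  assumes U: "U \<in> carrier_mat m m"
  shows "diag_block (complex_of_real r) (U * rdiag m l * cadj U)
    = diag_block 1 U * rdiag (Suc m) (case_nat r l) * cadj (diag_block 1 U)"
proof (rule eq_matI)
  have Vc: "diag_block 1 U \<in> carrier_mat (Suc m) (Suc m)" using U by simp
  fix i j assume "i < dim_row (diag_block 1 U * rdiag (Suc m) (case_nat r l) * cadj (diag_block 1 U))"
    and "j < dim_col (diag_block 1 U * rdiag (Suc m) (case_nat r l) * cadj (diag_block 1 U))"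
  then have i: "i < Suc m" and j: "j < Suc m" using Vc by auto
  have "(diag_block 1 U * rdiag (Suc m) (case_nat r l) * cadj (diag_block 1 U)) $$ (i,j)
    = diag_block 1 U $$ (i,0) * complex_of_real r * cnj (diag_block 1 U $$ (j,0))
      + (\<Sum>k<m. diag_block 1 U $$ (i,Suc k) * complex_of_real (l k) * cnj (diag_block 1 U $$ (j,Suc k)))"
    by (simp add: index_mult_rdiag_cadj[OF Vc i j] sum.lessThan_Suc_shift del: sum.lessThan_Suc)
  also have "\<dots> = diag_block (complex_of_real r) (U * rdiag m l * cadj U) $$ (i,j)"
    using i j U by (cases i; cases j) (simp_all add: index_mult_rdiag_cadj[OF U] del: index_mult_mat(1))
  finally show "diag_block (complex_of_real r) (U * rdiag m l * cadj U) $$ (i,j)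
    = (diag_block 1 U * rdiag (Suc m) (case_nat r l) * cadj (diag_block 1 U)) $$ (i,j)" ..
qed (use U in auto)

lemma hermitian_iff_index:
  "hermitian n A \<longleftrightarrow> A \<in> carrier_mat n n \<and> (\<forall>i<n. \<forall>j<n. A $$ (i,j) = cnj (A $$ (j,i)))"
proof -
  have "cadj A = A \<longleftrightarrow> (\<forall>i<n. \<forall>j<n. A $$ (i,j) = cnj (A $$ (j,i)))" if A: "A \<in> carrier_mat n n"
  proof (intro iffI allI impI)
    fix i j assume "cadj A = A" "i < n" "j < n"
    then have "A $$ (i,j) = cadj A $$ (i,j)" by simp
    also have "\<dots> = cnj (A $$ (j,i))" using A \<open>i < n\<close> \<open>j < n\<close> by simp
    finally show "A $$ (i,j) = cnj (A $$ (j,i))" .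
  next
    assume sym: "\<forall>i<n. \<forall>j<n. A $$ (i,j) = cnj (A $$ (j,i))"
    show "cadj A = A"
    proof (rule eq_matI)
      fix i j assume ij: "i < dim_row A" "j < dim_col A"
      then have "i < n" "j < n" using A by auto
      then have "A $$ (j,i) = cnj (A $$ (i,j))" using sym by blast
      then show "cadj A $$ (i,j) = A $$ (i,j)" using A ij by simp
    qed (use A in auto)
  qed
  then show ?thesis unfolding hermitian_def by blast
qed

lemma hermitian_first_col_diag_block:
  assumes A: "hermitian (Suc m) A" and col: "col A 0 = e \<cdot>\<^sub>v unit_vec (Suc m) 0"
  shows "\<exists>r B. hermitian m B \<and> A = diag_block (complex_of_real r) B"
proof -
  have Ac: "A \<in> carrier_mat (Suc m) (Suc m)"
    and sym: "\<And>i j. i < Suc m \<Longrightarrow> j < Suc m \<Longrightarrow> A $$ (i,j) = cnj (A $$ (j,i))"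
    using A unfolding hermitian_iff_index by blast+
  have first_col: "A $$ (i,0) = (if i = 0 then e else 0)" if "i < Suc m" for i
    using arg_cong[OF col, of "\<lambda>w. w $ i"] that Ac by auto
  have "A $$ (0,0) = e" using first_col[of 0] by simp
  then have "cnj e = e" using sym[of 0 0] by (metis zero_less_Suc)
  then have e: "e = complex_of_real (Re e)"
    by (metis Reals_cnj_iff of_real_Re)
  have first_row: "A $$ (0,j) = (if j = 0 then e else 0)" if "j < Suc m" for j
  proof -
    have "A $$ (0,j) = cnj (A $$ (j,0))" using sym[of 0 j] that by blast
    then show ?thesis using first_col[OF that] \<open>cnj e = e\<close> by simp
  qed
  define B where "B = mat m m (\<lambda>(i,j). A $$ (Suc i, Suc j))"
  have "hermitian m B"
    unfolding hermitian_iff_index B_def by (auto intro!: sym)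
  moreover have "A = diag_block (complex_of_real (Re e)) B"
  proof (rule eq_matI)
    fix i j assume "i < dim_row (diag_block (complex_of_real (Re e)) B)"
      "j < dim_col (diag_block (complex_of_real (Re e)) B)"
    then have i: "i < Suc m" and j: "j < Suc m" by (auto simp: B_def)
    show "A $$ (i,j) = diag_block (complex_of_real (Re e)) B $$ (i,j)"
      using i j first_col first_row e[symmetric] by (cases i; cases j) (auto simp: B_def)
  qed (use Ac in \<open>auto simp: B_def\<close>)
  ultimately show ?thesis by blast
qed

lemma hermitian_cadj_conj:
  assumes A: "hermitian n A" and W: "W \<in> carrier_mat n n"
  shows "hermitian n (cadj W * A * W)"
proof -
  have Ac: "A \<in> carrier_mat n n" and hA: "cadj A = A"
    using A by (auto simp: hermitian_def)
  have "cadj (cadj W * A * W) = cadj W * cadj (cadj W * A)"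
    using W Ac by (simp add: cadj_mult[of _ n n])
  also have "\<dots> = cadj W * A * W"
    using W Ac by (simp add: cadj_mult[of _ n n] hA assoc_mult_mat[of _ n n _ n _ n])
  finally show ?thesis
    using W Ac by (simp add: hermitian_def)
qed

lemma first_col_cadj_conj_eigenvector:
  assumes W: "unitary n W" and A: "A \<in> carrier_mat n n" and n: "0 < n"
    and eigen: "A *\<^sub>v col W 0 = e \<cdot>\<^sub>v col W 0"
  shows "col (cadj W * A * W) 0 = e \<cdot>\<^sub>v unit_vec n 0"
proof -
  have Wc: "W \<in> carrier_mat n n" using W by (rule unitary_carrier_mat)
  have "col (cadj W * A * W) 0 = (cadj W * A) *\<^sub>v col W 0"
    using Wc A n by (simp add: col_mult2[of _ n n _ n])
  also have "\<dots> = cadj W *\<^sub>v (A *\<^sub>v col W 0)"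
    using Wc A by (intro assoc_mult_mat_vec) auto
  also have "\<dots> = e \<cdot>\<^sub>v col (cadj W * W) 0"
    using Wc n by (simp add: eigen mult_mat_vec[of _ n n] col_mult2[of _ n n _ n])
  also have "\<dots> = e \<cdot>\<^sub>v unit_vec n 0"
    using W n by (simp add: unitary_cadj_mult)
  finally show ?thesis .
qed

theorem hermitian_unitary_diagonalization:
  "hermitian n A \<Longrightarrow> \<exists>U l. unitary n U \<and> A = U * rdiag n l * cadj U"
proof (induction n arbitrary: A)
  case 0
  then have "A = 1\<^sub>m 0 * rdiag 0 (\<lambda>_. 0) * cadj (1\<^sub>m 0)"
    by (auto simp: hermitian_def)
  moreover have "unitary 0 (1\<^sub>m 0)"
    by (auto simp: unitary_def)
  ultimately show ?case by blast
next
  case (Suc m)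
  have A: "A \<in> carrier_mat (Suc m) (Suc m)" using Suc.prems by (simp add: hermitian_def)
  obtain e where "eigenvalue A e"
    using spectrum_non_empty[OF A] by (auto simp: spectrum_def)
  then obtain v where v: "v \<in> carrier_vec (Suc m)" "v \<noteq> 0\<^sub>v (Suc m)" "A *\<^sub>v v = e \<cdot>\<^sub>v v"
    using A by (auto simp: eigenvalue_def eigenvector_def)
  obtain W c where W: "unitary (Suc m) W" and W0: "col W 0 = c \<cdot>\<^sub>v v"
    using unitary_first_col_exists[OF v(1,2)] by blast
  have "A *\<^sub>v col W 0 = e \<cdot>\<^sub>v col W 0"
    using A v by (simp add: W0 mult_mat_vec[OF A] smult_smult_assoc mult.commute)
  then have "col (cadj W * A * W) 0 = e \<cdot>\<^sub>v unit_vec (Suc m) 0"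
    using first_col_cadj_conj_eigenvector[OF W A] by simp
  then obtain r B where B: "hermitian m B" and AW: "cadj W * A * W = diag_block (complex_of_real r) B"
    using hermitian_first_col_diag_block hermitian_cadj_conj[OF Suc.prems unitary_carrier_mat[OF W]]
    by blast
  obtain U l where U: "unitary m U" and BU: "B = U * rdiag m l * cadj U"
    using Suc.IH[OF B] by blast
  define V where "V = W * diag_block 1 U"
  have Wc: "W \<in> carrier_mat (Suc m) (Suc m)" using W by (rule unitary_carrier_mat)
  have Uc: "U \<in> carrier_mat m m" using U by (rule unitary_carrier_mat)
  have "A = W * (cadj W * A * W) * cadj W"
    using unitary_conj_cancel[OF W A] by simp
  also have "\<dots> = V * rdiag (Suc m) (case_nat r l) * cadj V"
    unfolding AW BU diag_block_mult_rdiag_cadj[OF Uc] V_def using Wc Uc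
    by (simp add: cadj_mult[OF Wc diag_block_carrier_mat[OF Uc]]
        assoc_mult_mat[of _ "Suc m" "Suc m" _ "Suc m" _ "Suc m"])
  finally show ?case
    using unitary_mult[OF W unitary_diag_block[OF U]] unfolding V_def by blast
qed

lemma mat_fun_carrier_mat:
  assumes X: "hermitian n X"
  shows "mat_fun f X \<in> carrier_mat n n"
proof -
  have n: "dim_row X = n" using X by (auto simp: hermitian_def)
  obtain U l where p: "(SOME (U, l). spectral_decomp X U l) = (U, l)"
    by (cases "SOME (U, l). spectral_decomp X U l") auto
  have "\<exists>p. case p of (U, l) \<Rightarrow> spectral_decomp X U l"
    using hermitian_unitary_diagonalization[OF X] by (auto simp: spectral_decomp_def n)
  from someI_ex[OF this] have "unitary n U"
    unfolding p by (simp add: spectral_decomp_def n)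
  then show ?thesis
    by (simp add: mat_fun_def p n unitary_carrier_mat)
qed

section \<open>Eigenvalue bounds, positivity and traces\<close>

lemma real_eigenvalues_mult_rdiag_cadj:
  assumes U: "unitary n U"
  shows "{r. eigenvalue (U * rdiag n a * cadj U) (complex_of_real r)} = a ` {..<n}"
proof -
  have Uc: "U \<in> carrier_mat n n" using U by (rule unitary_carrier_mat)
  define D where "D = rdiag n a"
  have A: "U * D * cadj U \<in> carrier_mat n n" using Uc by (simp add: D_def)
  have "similar_mat_wit (U * D * cadj U) D U (cadj U)"
    using Uc U unitary_cadj_mult[OF U]
    by (auto simp: similar_mat_wit_def Let_def D_def unitary_def)
  then have sim: "similar_mat (U * D * cadj U) D"
    unfolding similar_mat_def by blast
  have D: "D \<in> carrier_mat n n" "upper_triangular D"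
    by (auto simp: D_def rdiag_def mat_diag_def upper_triangular_def)
  have "eigenvalue (U * D * cadj U) k \<longleftrightarrow> k \<in> set (diag_mat D)" for k
    unfolding eigenvalue_root_char_poly[OF A] char_poly_similar[OF sim]
      char_poly_upper_triangular[OF D] poly_prod_list_zero_iff by auto
  moreover have "set (diag_mat D) = (\<lambda>i. complex_of_real (a i)) ` {..<n}"
    by (auto simp: D_def diag_mat_def rdiag_def mat_diag_def)
  ultimately show ?thesis
    unfolding D_def by auto
qed

lemma le_lambda_max:
  "unitary n U \<Longrightarrow> i < n \<Longrightarrow> a i \<le> lambda_max (U * rdiag n a * cadj U)"
  unfolding lambda_max_def real_eigenvalues_mult_rdiag_cadj by simp

lemma lambda_min_le:
  "unitary n U \<Longrightarrow> i < n \<Longrightarrow> lambda_min (U * rdiag n a * cadj U) \<le> a i"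
  unfolding lambda_min_def real_eigenvalues_mult_rdiag_cadj by simp

lemma qform_mult_rdiag_cadj:
  assumes U: "U \<in> carrier_mat n n" and v: "v \<in> carrier_vec n"
  shows "qform (U * rdiag n c * cadj U) v =
    (\<Sum>k<n. complex_of_real (c k) * ((\<Sum>i<n. cnj (v $ i) * U $$ (i,k)) * cnj (\<Sum>j<n. cnj (v $ j) * U $$ (j,k))))"
proof -
  have "qform (U * rdiag n c * cadj U) v
    = (\<Sum>i<n. \<Sum>j<n. cnj (v $ i) * (\<Sum>k<n. U $$ (i,k) * complex_of_real (c k) * cnj (U $$ (j,k))) * v $ j)"
    unfolding qform_def using v by (simp add: index_mult_rdiag_cadj[OF U])
  also have "\<dots> = (\<Sum>i<n. \<Sum>j<n. \<Sum>k<n. complex_of_real (c k) * ((cnj (v $ i) * U $$ (i,k)) * (v $ j * cnj (U $$ (j,k)))))"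
    by (simp add: sum_distrib_left sum_distrib_right ac_simps)
  also have "\<dots> = (\<Sum>k<n. \<Sum>i<n. \<Sum>j<n. complex_of_real (c k) * ((cnj (v $ i) * U $$ (i,k)) * (v $ j * cnj (U $$ (j,k)))))"
    by (subst sum.swap, subst (2) sum.swap, rule refl)
  also have "\<dots> = (\<Sum>k<n. complex_of_real (c k) * ((\<Sum>i<n. cnj (v $ i) * U $$ (i,k)) * cnj (\<Sum>j<n. cnj (v $ j) * U $$ (j,k))))"
    by (simp add: sum_distrib_left sum_distrib_right ac_simps)
  finally show ?thesis .
qed

lemma psd_mult_rdiag_cadj:
  assumes U: "U \<in> carrier_mat n n" and c: "\<And>k. k < n \<Longrightarrow> 0 \<le> c k"
  shows "psd n (U * rdiag n c * cadj U)"
  unfolding psd_def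
proof (intro conjI ballI)
  show "hermitian n (U * rdiag n c * cadj U)"
    unfolding hermitian_iff_index
  proof (intro conjI allI impI)
    show "U * rdiag n c * cadj U \<in> carrier_mat n n" using U by simp
    fix i j assume i: "i < n" and j: "j < n"
    show "(U * rdiag n c * cadj U) $$ (i,j) = cnj ((U * rdiag n c * cadj U) $$ (j,i))"
      unfolding index_mult_rdiag_cadj[OF U i j] index_mult_rdiag_cadj[OF U j i]
      by (simp add: ac_simps)
  qed
  fix v :: "complex vec" assume v: "v \<in> carrier_vec n"
  show "0 \<le> Re (qform (U * rdiag n c * cadj U) v)"
    unfolding qform_mult_rdiag_cadj[OF U v] Re_sum
    by (rule sum_nonneg)
      (simp only: complex_norm_square[symmetric] of_real_mult[symmetric] Re_complex_of_real, simp add: c)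
qed

lemma qform_mult_rdiag_cadj_col:
  assumes U: "unitary n U" and k: "k < n"
  shows "qform (U * rdiag n p * cadj U) (col U k) = complex_of_real (p k)"
proof -
  have Uc: "U \<in> carrier_mat n n" using U by (rule unitary_carrier_mat)
  have "qform (U * rdiag n p * cadj U) (col U k)
    = (\<Sum>m<n. complex_of_real (p m) * ((if k = m then 1 else 0) * cnj (if k = m then 1 else 0)))"
    unfolding qform_mult_rdiag_cadj[OF Uc col_carrier_vec[OF k Uc]]
    using unitary_cols_orthonormal[OF U k] Uc k by (intro sum.cong) auto
  also have "\<dots> = complex_of_real (p k)"
    using k by (simp add: if_distrib cong: if_cong)
  finally show ?thesis .
qed

lemma mtrace_mult:
  "P \<in> carrier_mat n n \<Longrightarrow> M \<in> carrier_mat n n \<Longrightarrow>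
   mtrace (P * M) = (\<Sum>i<n. \<Sum>j<n. P $$ (i,j) * M $$ (j,i))"
  unfolding mtrace_def by (simp add: scalar_prod_def lessThan_atLeast0)

lemma mtrace_add:
  "A \<in> carrier_mat n n \<Longrightarrow> B \<in> carrier_mat n n \<Longrightarrow> mtrace (A + B) = mtrace A + mtrace B"
  by (simp add: mtrace_def sum.distrib)

lemma mtrace_minus:
  "A \<in> carrier_mat n n \<Longrightarrow> B \<in> carrier_mat n n \<Longrightarrow> mtrace (A - B) = mtrace A - mtrace B"
  by (simp add: mtrace_def sum_subtractf)

lemma mtrace_smult: "A \<in> carrier_mat n n \<Longrightarrow> mtrace (c \<cdot>\<^sub>m A) = c * mtrace A"
  unfolding mtrace_def sum_distrib_left by (rule sum.cong) auto

lemma mtrace_mult_rdiag_cadj_mult: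
  assumes U: "U \<in> carrier_mat n n" and D: "D \<in> carrier_mat n n"
  shows "mtrace (U * rdiag n p * cadj U * D) = (\<Sum>k<n. complex_of_real (p k) * qform D (col U k))"
proof -
  have "mtrace (U * rdiag n p * cadj U * D)
    = (\<Sum>i<n. \<Sum>j<n. (\<Sum>k<n. U $$ (i,k) * complex_of_real (p k) * cnj (U $$ (j,k))) * D $$ (j,i))"
    using U D by (simp add: mtrace_mult[of _ n] index_mult_rdiag_cadj del: index_mult_mat(1))
  also have "\<dots> = (\<Sum>i<n. \<Sum>j<n. \<Sum>k<n. complex_of_real (p k) * (cnj (U $$ (j,k)) * D $$ (j,i) * U $$ (i,k)))"
    by (simp add: sum_distrib_left sum_distrib_right ac_simps)
  also have "\<dots> = (\<Sum>k<n. \<Sum>j<n. \<Sum>i<n. complex_of_real (p k) * (cnj (U $$ (j,k)) * D $$ (j,i) * U $$ (i,k)))"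
    by (subst (2) sum.swap, subst sum.swap, subst (2) sum.swap, rule refl)
  also have "\<dots> = (\<Sum>k<n. complex_of_real (p k) * qform D (col U k))"
    unfolding qform_def using U by (simp add: sum_distrib_left)
  finally show ?thesis .
qed

lemma mtrace_mult_psd_nonneg:
  assumes P: "psd n P" and D: "psd n D"
  shows "0 \<le> Re (mtrace (P * D))"
proof -
  obtain U p where U: "unitary n U" and P_eq: "P = U * rdiag n p * cadj U"
    using hermitian_unitary_diagonalization P unfolding psd_def by blast
  have Uc: "U \<in> carrier_mat n n" using U by (rule unitary_carrier_mat)
  have Dc: "D \<in> carrier_mat n n" using D by (simp add: psd_def hermitian_def)
  have p: "0 \<le> p k" if k: "k < n" for k
  proof -
    have "0 \<le> Re (qform P (col U k))"
      using P col_carrier_vec[OF k Uc] unfolding psd_def by blast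
    then show ?thesis
      unfolding P_eq qform_mult_rdiag_cadj_col[OF U k] by simp
  qed
  have "0 \<le> Re (qform D (col U k))" if k: "k < n" for k
    using D col_carrier_vec[OF k Uc] unfolding psd_def by blast
  with p have "0 \<le> (\<Sum>k<n. p k * Re (qform D (col U k)))"
    by (intro sum_nonneg mult_nonneg_nonneg) auto
  also have "\<dots> = Re (mtrace (P * D))"
    unfolding P_eq mtrace_mult_rdiag_cadj_mult[OF Uc Dc] Re_sum by simp
  finally show ?thesis .
qed

lemma mult_rdiag_cadj_const:
  assumes U: "unitary n U"
  shows "U * rdiag n (\<lambda>_. c) * cadj U = complex_of_real c \<cdot>\<^sub>m 1\<^sub>m n"
proof (rule eq_matI)
  have Uc: "U \<in> carrier_mat n n" using U by (rule unitary_carrier_mat)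
  fix i j assume "i < dim_row (complex_of_real c \<cdot>\<^sub>m 1\<^sub>m n)" "j < dim_col (complex_of_real c \<cdot>\<^sub>m 1\<^sub>m n)"
  then have i: "i < n" and j: "j < n" by auto
  have "(U * rdiag n (\<lambda>_. c) * cadj U) $$ (i,j) = complex_of_real c * (\<Sum>k<n. U $$ (i,k) * cnj (U $$ (j,k)))"
    unfolding index_mult_rdiag_cadj[OF Uc i j] by (simp add: sum_distrib_left ac_simps)
  then show "(U * rdiag n (\<lambda>_. c) * cadj U) $$ (i,j) = (complex_of_real c \<cdot>\<^sub>m 1\<^sub>m n) $$ (i,j)"
    using unitary_rows_orthonormal[OF U i j] i j by simp
qed (use U in \<open>auto simp: unitary_def\<close>)

lemma mult_rdiag_cadj_diff:
  assumes U: "U \<in> carrier_mat n n"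
  shows "U * rdiag n a * cadj U - U * rdiag n b * cadj U = U * rdiag n (\<lambda>k. a k - b k) * cadj U"
proof (rule eq_matI)
  fix i j assume "i < dim_row (U * rdiag n (\<lambda>k. a k - b k) * cadj U)"
    "j < dim_col (U * rdiag n (\<lambda>k. a k - b k) * cadj U)"
  then have i: "i < n" and j: "j < n" using U by auto
  show "(U * rdiag n a * cadj U - U * rdiag n b * cadj U) $$ (i,j)
    = (U * rdiag n (\<lambda>k. a k - b k) * cadj U) $$ (i,j)"
    using U i j
    by (simp add: index_mult_rdiag_cadj sum_subtractf[symmetric] algebra_simps del: index_mult_mat(1))
qed (use U in auto)

lemma psd_lambda_max_minus:
  assumes A: "hermitian n A"
  shows "psd n (complex_of_real (lambda_max A) \<cdot>\<^sub>m 1\<^sub>m n - A)"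
proof -
  obtain U a where U: "unitary n U" and A_eq: "A = U * rdiag n a * cadj U"
    using hermitian_unitary_diagonalization[OF A] by blast
  have Uc: "U \<in> carrier_mat n n" using U by (rule unitary_carrier_mat)
  show ?thesis
    unfolding mult_rdiag_cadj_const[OF U, symmetric] A_eq mult_rdiag_cadj_diff[OF Uc]
    by (rule psd_mult_rdiag_cadj[OF Uc]) (simp add: le_lambda_max[OF U])
qed

lemma psd_minus_lambda_min:
  assumes A: "hermitian n A"
  shows "psd n (A - complex_of_real (lambda_min A) \<cdot>\<^sub>m 1\<^sub>m n)"
proof -
  obtain U a where U: "unitary n U" and A_eq: "A = U * rdiag n a * cadj U"
    using hermitian_unitary_diagonalization[OF A] by blast
  have Uc: "U \<in> carrier_mat n n" using U by (rule unitary_carrier_mat)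
  show ?thesis
    unfolding mult_rdiag_cadj_const[OF U, symmetric] A_eq mult_rdiag_cadj_diff[OF Uc]
    by (rule psd_mult_rdiag_cadj[OF Uc]) (simp add: lambda_min_le[OF U])
qed

lemma mtrace_smult_one_minus_mult:
  assumes "A \<in> carrier_mat n n" "M \<in> carrier_mat n n"
  shows "mtrace ((c \<cdot>\<^sub>m 1\<^sub>m n - A) * M) = c * mtrace M - mtrace (A * M)"
  using assms
  by (simp add: minus_mult_distrib_mat[of _ n n] mult_smult_assoc_mat[of _ n n]
      mtrace_minus[of _ n] mtrace_smult[of _ n])

lemma mtrace_minus_smult_one_mult:
  assumes "A \<in> carrier_mat n n" "M \<in> carrier_mat n n"
  shows "mtrace ((A - c \<cdot>\<^sub>m 1\<^sub>m n) * M) = mtrace (A * M) - c * mtrace M"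
  using assms
  by (simp add: minus_mult_distrib_mat[of _ n n] mult_smult_assoc_mat[of _ n n]
      mtrace_minus[of _ n] mtrace_smult[of _ n])

section \<open>Convexity of trace functionals of operator convex functions\<close>

(* h need only agree with the trace on square matrices: at a convex combination of positive definite
   matrices, squareness of the value of mat_fun is all the Loewner inequality provides. *)
lemma convex_on_pd_mat_fun:
  assumes oc: "operator_convex f" and P: "psd n P"
    and h: "\<And>M. M \<in> carrier_mat n n \<Longrightarrow> h M = Re (mtrace (P * M))"
  shows "convex_on_pd n (\<lambda>X. h (mat_fun f X))"
  unfolding convex_on_pd_def
proof (intro allI impI)
  fix X Y :: "complex mat" and t :: real
  assume X: "pd n X" and Y: "pd n Y" and t: "0 \<le> t" "t \<le> 1"
  define FZ where "FZ = mat_fun f (complex_of_real t \<cdot>\<^sub>m X + complex_of_real (1 - t) \<cdot>\<^sub>m Y)"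
  define G where "G = complex_of_real t \<cdot>\<^sub>m mat_fun f X + complex_of_real (1 - t) \<cdot>\<^sub>m mat_fun f Y"
  have le: "loewner_le n FZ G"
    using oc X Y t unfolding operator_convex_def FZ_def G_def by blast
  have FX: "mat_fun f X \<in> carrier_mat n n" and FY: "mat_fun f Y \<in> carrier_mat n n"
    using X Y by (simp_all add: pd_def mat_fun_carrier_mat)
  have FZ: "FZ \<in> carrier_mat n n" using le by (simp add: loewner_le_def)
  have Pc: "P \<in> carrier_mat n n" using P by (simp add: psd_def hermitian_def)
  have Gc: "G \<in> carrier_mat n n" using le by (simp add: loewner_le_def)
  have "P * G = complex_of_real t \<cdot>\<^sub>m (P * mat_fun f X) + complex_of_real (1 - t) \<cdot>\<^sub>m (P * mat_fun f Y)"
    unfolding G_def mult_add_distrib_mat[OF Pc smult_carrier_mat[OF FX] smult_carrier_mat[OF FY]]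
    by (simp add: mult_smult_distrib[OF Pc FX] mult_smult_distrib[OF Pc FY])
  then have "mtrace (P * (G - FZ))
      = complex_of_real t * mtrace (P * mat_fun f X) + complex_of_real (1 - t) * mtrace (P * mat_fun f Y)
        - mtrace (P * FZ)"
    using Pc FX FY FZ
    by (simp add: mult_minus_distrib_mat[OF Pc Gc FZ] mtrace_minus[of _ n] mtrace_add[of _ n]
        mtrace_smult[of _ n])
  then have "Re (mtrace (P * (G - FZ))) = t * h (mat_fun f X) + (1 - t) * h (mat_fun f Y) - h FZ"
    using FX FY FZ by (simp add: h)
  moreover have "0 \<le> Re (mtrace (P * (G - FZ)))"
    using le P mtrace_mult_psd_nonneg by (auto simp: loewner_le_def)
  ultimately show "h (mat_fun f (complex_of_real t \<cdot>\<^sub>m X + complex_of_real (1 - t) \<cdot>\<^sub>m Y))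
      \<le> t * h (mat_fun f X) + (1 - t) * h (mat_fun f Y)"
    unfolding FZ_def by linarith
qed

theorem mainTheorem9:
  fixes f :: "real \<Rightarrow> real" and n :: nat and A :: "complex mat"
  assumes "operator_convex f"
    and "psd n A"
  shows "rel_smooth n (lambda_max A) (\<lambda>X. Re (mtrace (A * mat_fun f X))) (\<lambda>X. Re (mtrace (mat_fun f X)))
       \<and> rel_strongly_convex n (lambda_min A) (\<lambda>X. Re (mtrace (A * mat_fun f X))) (\<lambda>X. Re (mtrace (mat_fun f X)))"
proof -
  have A: "hermitian n A" using assms(2) by (simp add: psd_def)
  have Ac: "A \<in> carrier_mat n n" using A by (simp add: hermitian_def)
  have "convex_on_pd n (\<lambda>X. lambda_max A * Re (mtrace (mat_fun f X)) - Re (mtrace (A * mat_fun f X)))"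
    by (rule convex_on_pd_mat_fun[OF assms(1) psd_lambda_max_minus[OF A],
          where h = "\<lambda>M. lambda_max A * Re (mtrace M) - Re (mtrace (A * M))"])
      (simp add: mtrace_smult_one_minus_mult[OF Ac])
  moreover have "convex_on_pd n (\<lambda>X. Re (mtrace (A * mat_fun f X)) - lambda_min A * Re (mtrace (mat_fun f X)))"
    by (rule convex_on_pd_mat_fun[OF assms(1) psd_minus_lambda_min[OF A],
          where h = "\<lambda>M. Re (mtrace (A * M)) - lambda_min A * Re (mtrace M)"])
      (simp add: mtrace_minus_smult_one_mult[OF Ac])
  ultimately show ?thesis
    unfolding rel_smooth_def rel_strongly_convex_def ..
qed

end
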